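(* For every $0<r<1$, the set $\Sigma_r:=\{q\in B:\ d(q,\partial B)=1-r\}$ is a topological sphere.
   Context: The first Heisenberg group $\mathbb{H}^1$ is $\mathbb{R}^3$ with product $(x,y,t)\cdot(x',y',t')=(x+x',y+y',t+t'-2xy'+2yx')$, Korányi norm $\|(z,t)\|=(|z|^4+t^2)^{1/4}$ ($z=x+\mathrm{i}y$), distance $d(p,q)=\|q^{-1}\cdot p\|$, $d(q,A)=\inf_{a\in A}d(q,a)$, and $B=\{q:\|q\|<1\}$ is the Korányi unit ball. *)

theory Defs
  imports "HOL-Analysis.Analysis"
begin

text \<open>The first Heisenberg group, modelled on real \<times> real \<times> real (points (x,y,t)),
  carrying the standard Euclidean topology of R^3.\<close>

type_synonym heis = "real \<times> real \<times> real"

fun heis_mult :: "heis \<Rightarrow> heis \<Rightarrow> heis" where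
  "heis_mult (x, y, t) (x', y', t') = (x + x', y + y', t + t' - 2 * x * y' + 2 * y * x')"

fun heis_inv :: "heis \<Rightarrow> heis" where
  "heis_inv (x, y, t) = (- x, - y, - t)"

fun kor_norm :: "heis \<Rightarrow> real" where
  "kor_norm (x, y, t) = root 4 ((x\<^sup>2 + y\<^sup>2)\<^sup>2 + t\<^sup>2)"

definition kor_dist :: "heis \<Rightarrow> heis \<Rightarrow> real" where
  "kor_dist p q = kor_norm (heis_mult (heis_inv q) p)"

definition kor_setdist :: "heis \<Rightarrow> heis set \<Rightarrow> real" where
  "kor_setdist q A = (INF a\<in>A. kor_dist q a)"

definition kor_ball :: "heis set" where
  "kor_ball = {q. kor_norm q < 1}"

definition Sigma_r :: "real \<Rightarrow> heis set" where
  "Sigma_r r = {q \<in> kor_ball. kor_setdist q (frontier kor_ball) = 1 - r}"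

end

theory Submission
  imports Defs
begin

(* Let rho = 1 - r. A point q of the Koranyi ball B satisfies d(q, frontier B) >= rho iff
   q b lies in B for every b with norm b < rho, because d(q b, q) = norm b. Right translations
   p |-> p b are affine maps of R^3 and B is convex, so the set C of these points is an
   intersection of convex sets; it is compact and contains 0 in its interior. Its frontier is
   exactly Sigma_r: moving a point with d(q, frontier B) = rho slightly towards a nearest
   boundary point leaves C. The frontier of a bounded convex set with nonempty interior in R^3
   is homeomorphic to the 2-sphere. *)

section \<open>The group law\<close>

lemma heis_mult_components:
  "heis_mult p q = (fst p + fst q, fst (snd p) + fst (snd q),
     snd (snd p) + snd (snd q) - 2 * fst p * fst (snd q) + 2 * fst (snd p) * fst q)"
  by (cases p; cases q) auto

lemma heis_inv_eq_uminus: "heis_inv p = - p"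
  by (cases p) auto

lemma heis_mult_assoc: "heis_mult (heis_mult p q) s = heis_mult p (heis_mult q s)"
  by (simp add: heis_mult_components algebra_simps)

lemma heis_mult_inv_right_cancel: "heis_mult p (heis_mult (heis_inv p) q) = q"
  by (simp add: heis_mult_components heis_inv_eq_uminus prod_eq_iff algebra_simps)

lemma heis_mult_inv_left_cancel: "heis_mult (heis_inv p) (heis_mult p q) = q"
  by (simp add: heis_mult_components heis_inv_eq_uminus prod_eq_iff algebra_simps)

lemma heis_inv_mult: "heis_inv (heis_mult p q) = heis_mult (heis_inv q) (heis_inv p)"
  by (simp add: heis_mult_components heis_inv_eq_uminus prod_eq_iff algebra_simps)

lemma heis_mult_zero_right [simp]: "heis_mult q 0 = q"
  by (simp add: heis_mult_components prod_eq_iff)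

lemma heis_mult_right_affine:
  "heis_mult ((1 - u) *\<^sub>R p + u *\<^sub>R q) b = (1 - u) *\<^sub>R heis_mult p b + u *\<^sub>R heis_mult q b"
  by (simp add: heis_mult_components prod_eq_iff algebra_simps)

lemma convex_heis_mult_right_vimage:
  assumes "convex S"
  shows "convex {p. heis_mult p b \<in> S}"
  using assms by (simp add: convex_alt heis_mult_right_affine)

lemma continuous_on_heis_mult [continuous_intros]:
  "continuous_on A f \<Longrightarrow> continuous_on A g \<Longrightarrow> continuous_on A (\<lambda>x. heis_mult (f x) (g x))"
  unfolding heis_mult_components by (intro continuous_intros)

lemma tendsto_heis_mult [tendsto_intros]:
  "(f \<longlongrightarrow> a) F \<Longrightarrow> (g \<longlongrightarrow> b) F \<Longrightarrow> ((\<lambda>x. heis_mult (f x) (g x)) \<longlongrightarrow> heis_mult a b) F"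
  unfolding heis_mult_components by (intro tendsto_intros)

lemma continuous_on_heis_inv [continuous_intros]:
  "continuous_on A f \<Longrightarrow> continuous_on A (\<lambda>x. heis_inv (f x))"
  unfolding heis_inv_eq_uminus by (intro continuous_intros)

section \<open>The Koranyi gauge\<close>

definition kor_gauge :: "heis \<Rightarrow> real" where
  "kor_gauge p = (fst p ^ 2 + fst (snd p) ^ 2) ^ 2 + snd (snd p) ^ 2"

lemma kor_gauge_nonneg: "0 \<le> kor_gauge p"
  by (simp add: kor_gauge_def)

lemma kor_norm_eq_root_gauge: "kor_norm p = root 4 (kor_gauge p)"
  by (cases p) (simp add: kor_gauge_def)

declare kor_norm.simps [simp del]

lemma kor_norm_nonneg: "0 \<le> kor_norm p"
  by (simp add: kor_norm_eq_root_gauge kor_gauge_nonneg)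

lemma kor_norm_power2: "kor_norm p ^ 2 = sqrt (kor_gauge p)"
proof -
  have "root 4 (kor_gauge p) = sqrt (sqrt (kor_gauge p))"
    using real_root_mult_exp[of 2 2] by (simp add: sqrt_def)
  then show ?thesis
    by (simp add: kor_norm_eq_root_gauge kor_gauge_nonneg)
qed

lemma kor_norm_less_iff: "kor_norm p < kor_norm q \<longleftrightarrow> kor_gauge p < kor_gauge q"
  and kor_norm_le_iff: "kor_norm p \<le> kor_norm q \<longleftrightarrow> kor_gauge p \<le> kor_gauge q"
  and kor_norm_less_1_iff: "kor_norm p < 1 \<longleftrightarrow> kor_gauge p < 1"
  and kor_norm_le_1_iff: "kor_norm p \<le> 1 \<longleftrightarrow> kor_gauge p \<le> 1"
  by (simp_all add: kor_norm_eq_root_gauge)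

lemma kor_norm_zero [simp]: "kor_norm 0 = 0"
  by (simp add: zero_prod_def kor_norm.simps)

lemma kor_norm_heis_inv [simp]: "kor_norm (heis_inv p) = kor_norm p"
  by (cases p) (simp add: kor_norm.simps)

lemma continuous_on_kor_norm [continuous_intros]:
  "continuous_on A f \<Longrightarrow> continuous_on A (\<lambda>x. kor_norm (f x))"
  unfolding kor_norm_eq_root_gauge kor_gauge_def by (intro continuous_intros)

lemma kor_norm_triangle: "kor_norm (heis_mult p q) \<le> kor_norm p + kor_norm q"
proof -
  define z where "z = (\<lambda>p::heis. Complex (fst p) (fst (snd p)))"
  define w where "w = (\<lambda>p::heis. Complex (fst p ^ 2 + fst (snd p) ^ 2) (snd (snd p)))"
  have norm_w: "cmod (w s) = kor_norm s ^ 2" for s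
    by (simp add: w_def kor_norm_power2 kor_gauge_def cmod_def)
  have norm_z: "cmod (z s) \<le> kor_norm s" for s
  proof -
    have "cmod (z s) ^ 2 = sqrt ((fst s ^ 2 + fst (snd s) ^ 2)\<^sup>2)"
      by (simp add: z_def cmod_def)
    also have "\<dots> \<le> sqrt (kor_gauge s)"
      by (simp add: kor_gauge_def)
    also have "\<dots> = kor_norm s ^ 2"
      by (rule kor_norm_power2[symmetric])
    finally show ?thesis
      by (rule power2_le_imp_le) (rule kor_norm_nonneg)
  qed
  have w_mult: "w (heis_mult p q) = w p + w q + 2 * z p * cnj (z q)"
    by (cases p; cases q) (simp add: w_def z_def complex_eq_iff power2_eq_square algebra_simps)
  have "kor_norm (heis_mult p q) ^ 2 \<le> cmod (w p + w q) + cmod (2 * z p * cnj (z q))"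
    unfolding norm_w[symmetric] w_mult by (rule norm_triangle_ineq)
  also have "\<dots> \<le> cmod (w p) + cmod (w q) + 2 * cmod (z p) * cmod (z q)"
    using norm_triangle_ineq[of "w p" "w q"] by (simp add: norm_mult)
  also have "\<dots> \<le> kor_norm p ^ 2 + kor_norm q ^ 2 + 2 * kor_norm p * kor_norm q"
    using mult_mono[OF norm_z norm_z kor_norm_nonneg norm_ge_zero, of p q] unfolding norm_w by linarith
  also have "\<dots> = (kor_norm p + kor_norm q) ^ 2"
    by (simp add: power2_sum)
  finally show ?thesis
    by (rule power2_le_imp_le) (simp add: kor_norm_nonneg add_nonneg_nonneg)
qed

lemma kor_gauge_scaleR_le:
  assumes "\<bar>s\<bar> \<le> 1"
  shows "kor_gauge (s *\<^sub>R p) \<le> s\<^sup>2 * kor_gauge p"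
proof -
  have "s ^ 4 = s\<^sup>2 * s\<^sup>2"
    by algebra
  also have "\<dots> \<le> s\<^sup>2"
    using assms by (intro mult_left_le) (simp_all add: abs_square_le_1)
  finally have "s ^ 4 \<le> s\<^sup>2" .
  then have "s ^ 4 * (fst p ^ 2 + fst (snd p) ^ 2) ^ 2 \<le> s\<^sup>2 * (fst p ^ 2 + fst (snd p) ^ 2) ^ 2"
    by (simp add: mult_right_mono)
  moreover have "kor_gauge (s *\<^sub>R p) = s ^ 4 * (fst p ^ 2 + fst (snd p) ^ 2) ^ 2 + s\<^sup>2 * snd (snd p) ^ 2"
    by (simp add: kor_gauge_def power_mult_distrib flip: distrib_left)
  ultimately show ?thesis
    by (simp add: kor_gauge_def algebra_simps)
qed

lemma kor_norm_scaleR_le: "\<bar>s\<bar> \<le> 1 \<Longrightarrow> kor_norm (s *\<^sub>R p) \<le> kor_norm p"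
  using kor_gauge_scaleR_le[of s p] mult_left_le_one_le[OF kor_gauge_nonneg[of p], of "s\<^sup>2"]
  by (simp add: kor_norm_le_iff abs_square_le_1)

lemma kor_norm_scaleR_less:
  assumes "\<bar>s\<bar> < 1" and "kor_norm p \<noteq> 0"
  shows "kor_norm (s *\<^sub>R p) < kor_norm p"
proof -
  have "0 < kor_gauge p"
    using assms(2) kor_gauge_nonneg[of p] by (auto simp: kor_norm_eq_root_gauge)
  moreover have "s\<^sup>2 < 1"
    using assms(1) by (simp add: abs_square_less_1)
  ultimately have "s\<^sup>2 * kor_gauge p < kor_gauge p"
    by simp
  then show ?thesis
    using kor_gauge_scaleR_le[of s p] assms(1) by (simp add: kor_norm_less_iff)
qed

lemma kor_dist_nonneg: "0 \<le> kor_dist p q"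
  by (simp add: kor_dist_def kor_norm_nonneg)

lemma kor_dist_self [simp]: "kor_dist p p = 0"
  by (simp add: kor_dist_def heis_mult_components heis_inv_eq_uminus zero_prod_def[symmetric])

lemma kor_dist_commute: "kor_dist p q = kor_dist q p"
  by (metis kor_dist_def kor_norm_heis_inv heis_inv_mult heis_inv_eq_uminus minus_minus)

lemma kor_dist_triangle: "kor_dist p a \<le> kor_dist p q + kor_dist q a"
proof -
  have "heis_mult (heis_mult (heis_inv a) q) (heis_mult (heis_inv q) p) = heis_mult (heis_inv a) p"
    by (simp add: heis_mult_assoc heis_mult_inv_right_cancel)
  then show ?thesis
    unfolding kor_dist_def by (metis add.commute kor_norm_triangle)
qed

lemma kor_dist_left_invariant: "kor_dist (heis_mult g p) (heis_mult g q) = kor_dist p q"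
  by (simp add: kor_dist_def heis_inv_mult heis_mult_assoc heis_mult_inv_left_cancel)

lemma kor_dist_mult_right_self: "kor_dist (heis_mult q b) q = kor_norm b"
  by (simp add: kor_dist_def heis_mult_inv_left_cancel)

lemma kor_dist_scaleR_same: "kor_dist (s *\<^sub>R b) b = kor_norm ((s - 1) *\<^sub>R b)"
proof -
  have "heis_mult (heis_inv b) (s *\<^sub>R b) = (s - 1) *\<^sub>R b"
    by (simp add: heis_mult_components heis_inv_eq_uminus prod_eq_iff algebra_simps)
  then show ?thesis
    by (simp add: kor_dist_def)
qed

lemma kor_dist_zero_left: "kor_dist 0 p = kor_norm p"
  by (simp add: kor_dist_def)

lemma continuous_on_kor_dist [continuous_intros]:
  "continuous_on A f \<Longrightarrow> continuous_on A g \<Longrightarrow> continuous_on A (\<lambda>x. kor_dist (f x) (g x))"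
  unfolding kor_dist_def by (intro continuous_intros)

section \<open>Distance to a set\<close>

lemma kor_setdist_le: "a \<in> A \<Longrightarrow> kor_setdist q A \<le> kor_dist q a"
  unfolding kor_setdist_def by (rule cINF_lower) (auto intro: bdd_belowI[of _ 0] kor_dist_nonneg)

lemma kor_setdist_greatest:
  "A \<noteq> {} \<Longrightarrow> (\<And>a. a \<in> A \<Longrightarrow> c \<le> kor_dist q a) \<Longrightarrow> c \<le> kor_setdist q A"
  unfolding kor_setdist_def by (rule cINF_greatest)

lemma kor_setdist_lipschitz:
  assumes "A \<noteq> {}"
  shows "\<bar>kor_setdist p A - kor_setdist q A\<bar> \<le> kor_dist p q"
proof -
  have "kor_setdist x A - kor_dist x y \<le> kor_setdist y A" for x y
  proof (rule kor_setdist_greatest[OF assms])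
    fix a
    assume "a \<in> A"
    then have "kor_setdist x A \<le> kor_dist x a"
      by (rule kor_setdist_le)
    also have "\<dots> \<le> kor_dist x y + kor_dist y a"
      by (rule kor_dist_triangle)
    finally show "kor_setdist x A - kor_dist x y \<le> kor_dist y a"
      by simp
  qed
  from this[of p q] this[of q p] show ?thesis
    unfolding abs_le_iff using kor_dist_commute[of p q] by linarith
qed

lemma continuous_on_kor_setdist:
  assumes "A \<noteq> {}"
  shows "continuous_on S (\<lambda>q. kor_setdist q A)"
proof -
  have "isCont (\<lambda>q. kor_setdist q A) q" for q
  proof -
    have "isCont (\<lambda>p. kor_dist p q) q"
      using continuous_on_kor_dist[OF continuous_on_id continuous_on_const, of UNIV q]
      by (meson UNIV_I continuous_on_eq_continuous_at open_UNIV)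
    then have "((\<lambda>p. kor_dist p q) \<longlongrightarrow> kor_dist q q) (at q)"
      by (simp add: isCont_def)
    then have "((\<lambda>p. kor_dist p q) \<longlongrightarrow> 0) (at q)"
      by simp
    then have "((\<lambda>p. kor_setdist p A - kor_setdist q A) \<longlongrightarrow> 0) (at q)"
      by (rule Lim_null_comparison[rotated]) (simp add: kor_setdist_lipschitz[OF assms])
    then show ?thesis
      by (simp add: isCont_def LIM_zero_iff)
  qed
  then show ?thesis
    by (simp add: continuous_at_imp_continuous_on)
qed

lemma kor_setdist_attained:
  assumes "compact A" and "A \<noteq> {}"
  obtains a where "a \<in> A" and "kor_setdist q A = kor_dist q a"
proof -
  obtain a where a: "a \<in> A" "\<And>b. b \<in> A \<Longrightarrow> kor_dist q a \<le> kor_dist q b"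
    using continuous_attains_inf[OF assms continuous_on_kor_dist[OF continuous_on_const continuous_on_id]]
    by blast
  then have "kor_dist q a \<le> kor_setdist q A"
    using assms(2) by (intro kor_setdist_greatest)
  with a(1) kor_setdist_le[OF a(1), of q] show thesis
    by (intro that) auto
qed

section \<open>The Koranyi ball\<close>

definition kor_sphere :: "heis set" where
  "kor_sphere = {p. kor_norm p = 1}"

lemma open_kor_ball: "open kor_ball"
  unfolding kor_ball_def by (intro open_Collect_less continuous_intros)

lemma convex_kor_gauge: "convex_on UNIV kor_gauge"
proof (rule convex_onI)
  fix u :: real and p q :: heis
  assume "0 < u" "u < 1"
  then have sq: "((1 - u) * a + u * b)\<^sup>2 \<le> (1 - u) * a\<^sup>2 + u * b\<^sup>2" for a b :: real
    using convex_onD[OF convex_power2, of u a b] by simp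
  define m where "m = (1 - u) *\<^sub>R p + u *\<^sub>R q"
  define h where "h = (\<lambda>p::heis. fst p ^ 2 + fst (snd p) ^ 2)"
  have "h m \<le> (1 - u) * h p + u * h q"
    using sq[of "fst p" "fst q"] sq[of "fst (snd p)" "fst (snd q)"]
    by (simp add: h_def m_def algebra_simps)
  then have "(h m)\<^sup>2 \<le> ((1 - u) * h p + u * h q)\<^sup>2"
    by (rule power_mono) (simp add: h_def)
  also have "\<dots> \<le> (1 - u) * (h p)\<^sup>2 + u * (h q)\<^sup>2"
    by (rule sq)
  finally have "(h m)\<^sup>2 \<le> (1 - u) * (h p)\<^sup>2 + u * (h q)\<^sup>2" .
  moreover have "(snd (snd m))\<^sup>2 \<le> (1 - u) * (snd (snd p))\<^sup>2 + u * (snd (snd q))\<^sup>2"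
    using sq by (simp add: m_def)
  moreover have "kor_gauge s = (h s)\<^sup>2 + (snd (snd s))\<^sup>2" for s
    by (simp add: kor_gauge_def h_def)
  ultimately show "kor_gauge m \<le> (1 - u) * kor_gauge p + u * kor_gauge q"
    by (simp add: algebra_simps)
qed simp

lemma convex_kor_ball: "convex kor_ball"
proof (rule convexI)
  fix p q :: heis and u v :: real
  assume "p \<in> kor_ball" "q \<in> kor_ball" "0 \<le> u" "0 \<le> v" "u + v = 1"
  moreover from this have "kor_gauge (u *\<^sub>R p + v *\<^sub>R q) \<le> max (kor_gauge p) (kor_gauge q)"
    by (intro convex_lower[OF convex_kor_gauge]) auto
  ultimately show "u *\<^sub>R p + v *\<^sub>R q \<in> kor_ball"
    by (simp add: kor_ball_def kor_norm_less_1_iff)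
qed

lemma frontier_kor_ball: "frontier kor_ball = kor_sphere"
proof -
  have "closure kor_ball \<subseteq> {p. kor_norm p \<le> 1}"
    by (rule closure_minimal)
       (auto simp: kor_ball_def intro: closed_Collect_le[OF continuous_on_kor_norm[OF continuous_on_id]])
  moreover have "p \<in> closure kor_ball" if "kor_norm p = 1" for p
  proof (rule Lim_in_closed_set[of _ "\<lambda>s. s *\<^sub>R p" "at_left 1"])
    have "\<forall>\<^sub>F s in at_left 1. s \<in> {0<..<1::real}"
      by (rule eventually_at_left_real) simp
    then show "\<forall>\<^sub>F s in at_left 1. s *\<^sub>R p \<in> closure kor_ball"
    proof eventually_elim
      case (elim s)
      then have "kor_norm (s *\<^sub>R p) < kor_norm p"
        by (intro kor_norm_scaleR_less) (simp_all add: that)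
      with that show ?case
        using closure_subset by (force simp: kor_ball_def)
    qed
    have "((\<lambda>s. s *\<^sub>R p) \<longlongrightarrow> 1 *\<^sub>R p) (at_left 1)"
      by (intro tendsto_intros)
    then show "((\<lambda>s. s *\<^sub>R p) \<longlongrightarrow> p) (at_left 1)"
      by simp
  qed auto
  then have "kor_sphere \<subseteq> closure kor_ball"
    by (auto simp: kor_sphere_def)
  moreover have "frontier kor_ball = closure kor_ball - kor_ball"
    using open_kor_ball by (simp add: frontier_def interior_open)
  ultimately show ?thesis
    by (force simp: kor_ball_def kor_sphere_def)
qed

lemma bounded_kor_norm_le_1: "bounded {p. kor_norm p \<le> 1}"
proof -
  have "norm p \<le> 2" if "kor_norm p \<le> 1" for p
  proof -
    obtain x y t where p: "p = (x, y, t)"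
      by (cases p) auto
    have "(x\<^sup>2 + y\<^sup>2)\<^sup>2 + t\<^sup>2 \<le> 1"
      using that by (simp add: kor_norm_le_1_iff kor_gauge_def p)
    then have "(x\<^sup>2 + y\<^sup>2)\<^sup>2 \<le> 1" and "t\<^sup>2 \<le> 1"
      using zero_le_power2[of t] zero_le_power2[of "x\<^sup>2 + y\<^sup>2"] by linarith+
    then have "x\<^sup>2 + y\<^sup>2 \<le> 1" and "t\<^sup>2 \<le> 1"
      by (simp_all add: abs_square_le_1)
    then have "x\<^sup>2 + (y\<^sup>2 + t\<^sup>2) \<le> 2\<^sup>2"
      by simp
    then have "sqrt (x\<^sup>2 + (y\<^sup>2 + t\<^sup>2)) \<le> sqrt (2\<^sup>2)"
      by (rule real_sqrt_le_mono)
    then show ?thesis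
      by (simp add: p norm_Pair)
  qed
  then show ?thesis
    unfolding bounded_iff by blast
qed

lemma kor_sphere_nonempty: "kor_sphere \<noteq> {}"
proof -
  have "(1, 0, 0) \<in> kor_sphere"
    by (simp add: kor_sphere_def kor_norm.simps)
  then show ?thesis
    by blast
qed

lemma compact_kor_sphere: "compact kor_sphere"
  unfolding compact_eq_bounded_closed
proof
  show "bounded kor_sphere"
    by (rule bounded_subset[OF bounded_kor_norm_le_1]) (auto simp: kor_sphere_def)
  show "closed kor_sphere"
    unfolding kor_sphere_def
    by (intro closed_Collect_eq continuous_on_kor_norm continuous_on_id continuous_on_const)
qed

lemma kor_setdist_zero_sphere: "kor_setdist 0 kor_sphere = 1"
proof (rule antisym)
  obtain a where "a \<in> kor_sphere"
    using kor_sphere_nonempty by blast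
  from kor_setdist_le[OF this, of 0] this show "kor_setdist 0 kor_sphere \<le> 1"
    by (simp add: kor_dist_zero_left kor_sphere_def)
  show "1 \<le> kor_setdist 0 kor_sphere"
    by (rule kor_setdist_greatest[OF kor_sphere_nonempty]) (simp add: kor_dist_zero_left kor_sphere_def)
qed

lemma heis_mult_in_kor_ball:
  assumes q: "q \<in> kor_ball" and b: "kor_norm b < kor_setdist q kor_sphere"
  shows "heis_mult q b \<in> kor_ball"
proof (rule ccontr)
  assume "heis_mult q b \<notin> kor_ball"
  define g where "g s = kor_norm (heis_mult q (s *\<^sub>R b))" for s
  have "continuous_on {0..1} g"
    unfolding g_def by (intro continuous_intros)
  moreover have "g 0 \<le> 1" and "1 \<le> g 1"
    using q \<open>heis_mult q b \<notin> kor_ball\<close> by (simp_all add: g_def kor_ball_def)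
  ultimately obtain s where s: "0 \<le> s" "s \<le> 1" "g s = 1"
    using IVT'[of g 0 1 1] by auto
  define a where "a = heis_mult q (s *\<^sub>R b)"
  have "a \<in> kor_sphere"
    using s by (simp add: kor_sphere_def a_def g_def)
  then have "kor_setdist q kor_sphere \<le> kor_dist a q"
    using kor_setdist_le kor_dist_commute by metis
  also have "\<dots> = kor_norm (s *\<^sub>R b)"
    by (simp add: a_def kor_dist_mult_right_self)
  also have "\<dots> \<le> kor_norm b"
    using s by (intro kor_norm_scaleR_le) simp
  finally show False
    using b by simp
qed

section \<open>Inner parallel sets of the Koranyi ball\<close>

definition kor_inner_parallel :: "real \<Rightarrow> heis set" where
  "kor_inner_parallel \<rho> = {q. kor_norm q \<le> 1 \<and> \<rho> \<le> kor_setdist q kor_sphere}"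

lemma kor_inner_parallel_subset_kor_ball:
  assumes "0 < \<rho>"
  shows "kor_inner_parallel \<rho> \<subseteq> kor_ball"
proof
  fix q
  assume q: "q \<in> kor_inner_parallel \<rho>"
  have "q \<notin> kor_sphere"
  proof
    assume "q \<in> kor_sphere"
    then have "kor_setdist q kor_sphere \<le> 0"
      using kor_setdist_le[of q kor_sphere q] by simp
    with q assms show False
      by (simp add: kor_inner_parallel_def)
  qed
  with q show "q \<in> kor_ball"
    by (auto simp: kor_inner_parallel_def kor_sphere_def kor_ball_def)
qed

lemma kor_inner_parallel_eq_INT:
  assumes "0 < \<rho>"
  shows "kor_inner_parallel \<rho> = (\<Inter>b\<in>{b. kor_norm b < \<rho>}. {q. heis_mult q b \<in> kor_ball})"
proof (intro equalityI subsetI)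
  fix q
  assume q: "q \<in> kor_inner_parallel \<rho>"
  then have "q \<in> kor_ball"
    using kor_inner_parallel_subset_kor_ball[OF assms] by blast
  with q show "q \<in> (\<Inter>b\<in>{b. kor_norm b < \<rho>}. {q. heis_mult q b \<in> kor_ball})"
    by (auto simp: kor_inner_parallel_def intro: heis_mult_in_kor_ball)
next
  fix q
  assume q: "q \<in> (\<Inter>b\<in>{b. kor_norm b < \<rho>}. {q. heis_mult q b \<in> kor_ball})"
  have "\<rho> \<le> kor_dist q a" if a: "a \<in> kor_sphere" for a
  proof (rule ccontr)
    assume "\<not> \<rho> \<le> kor_dist q a"
    then have "kor_norm (heis_mult (heis_inv q) a) < \<rho>"
      by (simp add: kor_dist_def[of a q, symmetric] kor_dist_commute[of a q])
    with q have "heis_mult q (heis_mult (heis_inv q) a) \<in> kor_ball"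
      by blast
    with a show False
      by (simp add: heis_mult_inv_right_cancel kor_ball_def kor_sphere_def)
  qed
  then have "\<rho> \<le> kor_setdist q kor_sphere"
    by (rule kor_setdist_greatest[OF kor_sphere_nonempty])
  moreover have "q \<in> kor_ball"
    using INT_D[OF q, of 0] assms by simp
  ultimately show "q \<in> kor_inner_parallel \<rho>"
    by (simp add: kor_inner_parallel_def kor_ball_def)
qed

lemma convex_kor_inner_parallel: "0 < \<rho> \<Longrightarrow> convex (kor_inner_parallel \<rho>)"
  unfolding kor_inner_parallel_eq_INT
  by (intro convex_INT convex_heis_mult_right_vimage convex_kor_ball)

lemma closed_kor_inner_parallel: "closed (kor_inner_parallel \<rho>)"
  unfolding kor_inner_parallel_def
  by (intro closed_Collect_conj closed_Collect_le continuous_on_kor_norm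
      continuous_on_kor_setdist[OF kor_sphere_nonempty] continuous_on_id continuous_on_const)

lemma bounded_kor_inner_parallel: "bounded (kor_inner_parallel \<rho>)"
  by (rule bounded_subset[OF bounded_kor_norm_le_1]) (auto simp: kor_inner_parallel_def)

lemma interior_kor_inner_parallel_superset:
  "{q \<in> kor_ball. \<rho> < kor_setdist q kor_sphere} \<subseteq> interior (kor_inner_parallel \<rho>)"
proof (rule interior_maximal)
  show "{q \<in> kor_ball. \<rho> < kor_setdist q kor_sphere} \<subseteq> kor_inner_parallel \<rho>"
    by (auto simp: kor_ball_def kor_inner_parallel_def)
  show "open {q \<in> kor_ball. \<rho> < kor_setdist q kor_sphere}"
    unfolding kor_ball_def mem_Collect_eq
    by (intro open_Collect_conj open_Collect_less continuous_on_kor_norm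
        continuous_on_kor_setdist[OF kor_sphere_nonempty] continuous_on_id continuous_on_const)
qed

lemma zero_in_interior_kor_inner_parallel:
  "\<rho> < 1 \<Longrightarrow> 0 \<in> interior (kor_inner_parallel \<rho>)"
  using interior_kor_inner_parallel_superset[of \<rho>]
  by (force simp: kor_ball_def kor_setdist_zero_sphere)

lemma mem_closure_compl_kor_inner_parallel:
  assumes "0 < \<rho>" and dq: "kor_setdist q kor_sphere = \<rho>"
  shows "q \<in> closure (- kor_inner_parallel \<rho>)"
proof -
  obtain a where a: "a \<in> kor_sphere" and da: "kor_setdist q kor_sphere = kor_dist q a"
    using kor_setdist_attained[OF compact_kor_sphere kor_sphere_nonempty] by blast
  define b where "b = heis_mult (heis_inv q) a"
  have qb: "heis_mult q b = a"
    by (simp add: b_def heis_mult_inv_right_cancel)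
  have nb: "kor_norm b = \<rho>"
    using da dq by (simp add: b_def kor_dist_def[of a q, symmetric] kor_dist_commute[of a q])
  txt \<open>Moving from \<open>q\<close> towards the nearest boundary point \<open>a = q b\<close> along \<open>s \<mapsto> q (s b)\<close>
    immediately leaves the inner parallel set.\<close>
  have "\<forall>\<^sub>F s in at_right 0. s \<in> {0<..<1::real}"
    by (rule eventually_at_right_real) simp
  then have "\<forall>\<^sub>F s in at_right 0. heis_mult q (s *\<^sub>R b) \<in> closure (- kor_inner_parallel \<rho>)"
  proof eventually_elim
    case (elim s)
    have "kor_setdist (heis_mult q (s *\<^sub>R b)) kor_sphere \<le> kor_dist (heis_mult q (s *\<^sub>R b)) a"
      by (rule kor_setdist_le[OF a])
    also have "\<dots> = kor_norm ((s - 1) *\<^sub>R b)"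
      using kor_dist_left_invariant[of q "s *\<^sub>R b" b] by (simp add: qb kor_dist_scaleR_same)
    also have "\<dots> < \<rho>"
      using elim assms nb kor_norm_scaleR_less[of "s - 1" b] by simp
    finally show ?case
      using closure_subset by (force simp: kor_inner_parallel_def)
  qed
  moreover have "((\<lambda>s. heis_mult q (s *\<^sub>R b)) \<longlongrightarrow> heis_mult q (0 *\<^sub>R b)) (at_right 0)"
    by (intro tendsto_intros)
  ultimately show ?thesis
    by (intro Lim_in_closed_set[OF closed_closure]) simp_all
qed

lemma frontier_kor_inner_parallel:
  assumes "0 < \<rho>"
  shows "frontier (kor_inner_parallel \<rho>) = {q \<in> kor_ball. kor_setdist q kor_sphere = \<rho>}"
proof (intro equalityI subsetI)
  fix q
  assume q: "q \<in> frontier (kor_inner_parallel \<rho>)"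
  then have "q \<in> kor_inner_parallel \<rho>" and "q \<notin> interior (kor_inner_parallel \<rho>)"
    using frontier_subset_closed[OF closed_kor_inner_parallel] by (auto simp: frontier_def)
  with kor_inner_parallel_subset_kor_ball[OF assms] interior_kor_inner_parallel_superset[of \<rho>]
  show "q \<in> {q \<in> kor_ball. kor_setdist q kor_sphere = \<rho>}"
    by (force simp: kor_inner_parallel_def)
next
  fix q
  assume "q \<in> {q \<in> kor_ball. kor_setdist q kor_sphere = \<rho>}"
  then have "q \<in> closure (kor_inner_parallel \<rho>)"
    using closure_subset by (force simp: kor_inner_parallel_def kor_ball_def)
  moreover have "q \<in> closure (- kor_inner_parallel \<rho>)"
    using \<open>q \<in> {q \<in> kor_ball. kor_setdist q kor_sphere = \<rho>}\<close> assms
    by (intro mem_closure_compl_kor_inner_parallel) auto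
  ultimately show "q \<in> frontier (kor_inner_parallel \<rho>)"
    by (simp add: frontier_closures)
qed

lemma frontier_convex_bounded_homeomorphic_sphere:
  fixes S :: "'a::euclidean_space set"
  assumes "convex S" and "bounded S" and "interior S \<noteq> {}"
  shows "frontier S homeomorphic sphere (0::'a) 1"
proof -
  have "rel_frontier S homeomorphic rel_frontier (cball (0::'a) 1)"
    using assms aff_dim_nonempty_interior[of S] aff_dim_cball[of 1 "0::'a"]
    by (intro homeomorphic_rel_frontiers_convex_bounded_sets) auto
  then show ?thesis
    using rel_frontier_nonempty_interior[OF assms(3)] by simp
qed

theorem proposition6p7:
  fixes r :: real
  assumes "0 < r" and "r < 1"
  shows "Sigma_r r homeomorphic sphere (0 :: real \<times> real \<times> real) 1"
proof -
  have "Sigma_r r = frontier (kor_inner_parallel (1 - r))"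
    using assms by (simp add: Sigma_r_def frontier_kor_ball frontier_kor_inner_parallel)
  also have "\<dots> homeomorphic sphere (0 :: heis) 1"
    using assms convex_kor_inner_parallel bounded_kor_inner_parallel
      zero_in_interior_kor_inner_parallel[of "1 - r"]
    by (intro frontier_convex_bounded_homeomorphic_sphere) auto
  finally show ?thesis .
qed

end
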